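(* For every $n\ge1$ and every $A\subseteq[n]$, the set-alternating domain $D_X(A)$ is connected: for any two orders in $D_X(A)$, the second can be obtained from the first by a sequence of transpositions of adjacent alternatives such that every intermediate order lies in $D_X(A)$.
   Context: Alternatives are $X=[n]$, with societal axis $1<\dots<n$; linear orders are written as strings, leftmost ranked highest. For $A\subseteq[n]$, $D_X(A)$ is the set of all linear orders $q$ on $[n]$ such that for every triple $i<j<k$: if $j\in A$ then $i$ is not ranked last among $\{i,j,k\}$ in $q$, and if $j\notin A$ then $k$ is not ranked first among $\{i,j,k\}$ in $q$. *)

theory Defs
  imports Main
begin

text \<open>A linear order on [n] = {1..n} is a list containing each alternative exactly once;
  the leftmost entry is ranked highest.\<close>
definition lin_orders :: "nat \<Rightarrow> nat list set" where
  "lin_orders n = {q. distinct q \<and> set q = {1..n}}"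

definition above :: "nat list \<Rightarrow> nat \<Rightarrow> nat \<Rightarrow> bool" where
  "above q x y \<longleftrightarrow> (\<exists>i j. i < j \<and> j < length q \<and> q ! i = x \<and> q ! j = y)"

definition D_X :: "nat \<Rightarrow> nat set \<Rightarrow> nat list set" where
  "D_X n A = {q \<in> lin_orders n.
     \<forall>i j k. 1 \<le> i \<and> i < j \<and> j < k \<and> k \<le> n \<longrightarrow>
       (j \<in> A \<longrightarrow> \<not> (above q j i \<and> above q k i)) \<and>
       (j \<notin> A \<longrightarrow> \<not> (above q k i \<and> above q k j))}"

definition adj_swap :: "nat list \<Rightarrow> nat list \<Rightarrow> bool" where
  "adj_swap q q' \<longleftrightarrow> (\<exists>p. Suc p < length q \<and> q' = q[p := q ! Suc p, Suc p := q ! p])"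

end

theory Submission
  imports Defs
begin

text \<open>Call a pair of alternatives u > v with u ranked above v an inversion. Transposing an
  adjacent inverted pair removes exactly that inversion and creates no new one. Each condition
  defining D_X(A) forbids a pair of inversions, so D_X(A) is closed under passing to orders
  with fewer inversions. Hence every order of D_X(A) descends inside D_X(A) to the identity
  order 1 2 ... n by adjacent transpositions, and since transpositions are reversible, any two
  orders of D_X(A) are connected through that identity order.\<close>

definition swap_adjacent :: "nat list \<Rightarrow> nat \<Rightarrow> nat list" where
  "swap_adjacent q p = q[p := q ! Suc p, Suc p := q ! p]"

lemma length_swap_adjacent [simp]: "length (swap_adjacent q p) = length q"
  unfolding swap_adjacent_def by simp

lemma swap_adjacent_swap_adjacent:
  "Suc p < length q \<Longrightarrow> swap_adjacent (swap_adjacent q p) p = q"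
  unfolding swap_adjacent_def by (auto simp: list_eq_iff_nth_eq nth_list_update)

lemma adj_swap_swap_adjacent: "Suc p < length q \<Longrightarrow> adj_swap q (swap_adjacent q p)"
  unfolding adj_swap_def swap_adjacent_def by blast

lemma adj_swap_sym: "adj_swap q q' \<Longrightarrow> adj_swap q' q"
  by (metis adj_swap_def swap_adjacent_def swap_adjacent_swap_adjacent length_swap_adjacent)

lemma lin_orders_swap_adjacent:
  "q \<in> lin_orders n \<Longrightarrow> Suc p < length q \<Longrightarrow> swap_adjacent q p \<in> lin_orders n"
  unfolding lin_orders_def swap_adjacent_def by simp

lemma above_swap_adjacentD:
  assumes "Suc p < length q" "above (swap_adjacent q p) x y" "(x, y) \<noteq> (q ! Suc p, q ! p)"
  shows "above q x y"
proof -
  define \<sigma> where "\<sigma> k = (if k = p then Suc p else if k = Suc p then p else k)" for k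
  have nth: "swap_adjacent q p ! k = q ! \<sigma> k" if "k < length q" for k
    using that assms(1) unfolding swap_adjacent_def \<sigma>_def by (auto simp: nth_list_update)
  obtain i j where ij: "i < j" "j < length q" "swap_adjacent q p ! i = x" "swap_adjacent q p ! j = y"
    using assms(2) unfolding above_def by auto
  then have x: "q ! \<sigma> i = x" and y: "q ! \<sigma> j = y"
    using nth by auto
  with assms(3) have "\<not> (i = p \<and> j = Suc p)"
    unfolding \<sigma>_def by auto
  with ij assms(1) have "\<sigma> i < \<sigma> j" "\<sigma> j < length q"
    unfolding \<sigma>_def by auto
  with x y show ?thesis
    unfolding above_def by blast
qed

lemma above_asym: "distinct q \<Longrightarrow> above q x y \<Longrightarrow> \<not> above q y x"
  unfolding above_def by (metis nth_eq_iff_index_eq order.strict_trans not_less_iff_gr_or_eq)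

definition inversions :: "nat list \<Rightarrow> (nat \<times> nat) set" where
  "inversions q = {(u, v). v < u \<and> above q u v}"

lemma finite_inversions: "finite (inversions q)"
proof (rule finite_subset)
  show "inversions q \<subseteq> set q \<times> set q"
    unfolding inversions_def above_def by auto
qed simp

lemma inversions_swap_adjacent_psubset:
  assumes "distinct q" "Suc p < length q" "q ! Suc p < q ! p"
  shows "inversions (swap_adjacent q p) \<subset> inversions q"
proof
  show "inversions (swap_adjacent q p) \<subseteq> inversions q"
    using above_swap_adjacentD[OF assms(2)] assms(3) unfolding inversions_def by fastforce
  have "swap_adjacent q p ! p = q ! Suc p" "swap_adjacent q p ! Suc p = q ! p"
    using assms(2) unfolding swap_adjacent_def by (simp_all add: nth_list_update)
  then have "above (swap_adjacent q p) (q ! Suc p) (q ! p)"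
    using assms(2) unfolding above_def by (metis lessI length_swap_adjacent)
  then have "\<not> above (swap_adjacent q p) (q ! p) (q ! Suc p)"
    using assms(1,2) by (intro above_asym) (simp_all add: swap_adjacent_def)
  moreover have "above q (q ! p) (q ! Suc p)"
    using assms(2) unfolding above_def by auto
  ultimately show "inversions (swap_adjacent q p) \<noteq> inversions q"
    using assms(3) unfolding inversions_def by blast
qed

lemma lin_orders_sorted_eq_upt:
  assumes "q \<in> lin_orders n" "sorted q"
  shows "q = [1..<Suc n]"
  using assms unfolding lin_orders_def
  by (metis (mono_tags) mem_Collect_eq atLeastLessThanSuc_atLeastAtMost distinct_upt set_upt
      sorted_distinct_set_unique sorted_upt)

lemma connected_to_upt_if_inversions_closed:
  assumes closed: "\<And>q q'. q \<in> S \<Longrightarrow> q' \<in> lin_orders n \<Longrightarrow> inversions q' \<subseteq> inversions q \<Longrightarrow> q' \<in> S"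
    and S: "S \<subseteq> lin_orders n" and "q \<in> S"
  shows "(\<lambda>q q'. adj_swap q q' \<and> q \<in> S \<and> q' \<in> S)\<^sup>*\<^sup>* q [1..<Suc n]"
  using \<open>q \<in> S\<close>
proof (induction "card (inversions q)" arbitrary: q rule: less_induct)
  case less
  let ?R = "\<lambda>q q'. adj_swap q q' \<and> q \<in> S \<and> q' \<in> S"
  have q: "q \<in> lin_orders n"
    using less.prems S by blast
  show ?case
  proof (cases "sorted q")
    case True
    then show ?thesis
      using lin_orders_sorted_eq_upt[OF q] by simp
  next
    case False
    then obtain p where p: "Suc p < length q" "q ! Suc p < q ! p"
      unfolding sorted_iff_nth_Suc by (metis not_less)
    let ?q' = "swap_adjacent q p"
    have "distinct q"
      using q unfolding lin_orders_def by blast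
    then have inv: "inversions ?q' \<subset> inversions q"
      using inversions_swap_adjacent_psubset p by blast
    have q': "?q' \<in> S"
      using closed[OF less.prems lin_orders_swap_adjacent[OF q p(1)]] inv by blast
    have "card (inversions ?q') < card (inversions q)"
      using inv by (simp add: psubset_card_mono finite_inversions)
    then have "?R\<^sup>*\<^sup>* ?q' [1..<Suc n]"
      using less.hyps q' by blast
    moreover have "?R q ?q'"
      using adj_swap_swap_adjacent[OF p(1)] less.prems q' by blast
    ultimately show ?thesis
      by (rule converse_rtranclp_into_rtranclp[rotated])
  qed
qed

lemma D_X_inversions_closed:
  assumes "q \<in> D_X n A" "q' \<in> lin_orders n" "inversions q' \<subseteq> inversions q"
  shows "q' \<in> D_X n A"
proof -
  have "above q u v" if "v < u" "above q' u v" for u v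
    using assms(3) that unfolding inversions_def by blast
  with assms(1,2) show ?thesis
    unfolding D_X_def by (simp (no_asm_use)) (meson order.strict_trans)
qed

theorem proposition2:
  fixes n :: nat and A :: "nat set" and q1 q2 :: "nat list"
  assumes "n \<ge> 1" and "A \<subseteq> {1..n}"
    and "q1 \<in> D_X n A" and "q2 \<in> D_X n A"
  shows "(\<lambda>q q'. adj_swap q q' \<and> q \<in> D_X n A \<and> q' \<in> D_X n A)\<^sup>*\<^sup>* q1 q2"
proof -
  let ?R = "\<lambda>q q'. adj_swap q q' \<and> q \<in> D_X n A \<and> q' \<in> D_X n A"
  have D_X_lin_orders: "D_X n A \<subseteq> lin_orders n"
    unfolding D_X_def by blast
  have "?R\<^sup>*\<^sup>* q [1..<Suc n]" if "q \<in> D_X n A" for q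
    using D_X_inversions_closed D_X_lin_orders that by (rule connected_to_upt_if_inversions_closed)
  then have "?R\<^sup>*\<^sup>* q1 [1..<Suc n]" "?R\<^sup>*\<^sup>* q2 [1..<Suc n]"
    using assms(3,4) by blast+
  moreover have "symp ?R"
    by (auto intro: sympI adj_swap_sym)
  ultimately show ?thesis
    by (meson rtranclp_trans sympD symp_rtranclp)
qed

end
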